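(* Let $k\in\mathbb{N}$ and let $t$ be a positive integer. For every Dunkl-harmonic $H_k\in\mathcal{H}_k$ of degree $k$, the Clifford--Hermite polynomial satisfies \[ (D_+)^{2t}H_k=\phi_{2t,k}^{\mu}(|x|^2)\,H_k,\qquad \phi_{2t,k}^{\mu}(|x|^{2}) = 2^{2t}\, t!\, L_{t}^{\frac{\mu}{2} + k-1}(|x|^2), \] where $L_t^\alpha$ is the generalized Laguerre polynomial \[ L_{t}^{\alpha}(x) = \sum_{i=0}^t \frac{\Gamma(t +\alpha +1)}{i!\, (t-i)!\, \Gamma(i + \alpha +1)} (-x)^i. \]
   Context: Let $R\subset\mathbb{R}^m$ be a reduced root system normalized so that $\langle\alpha,\alpha\rangle=2$ for all $\alpha\in R$, with positive subsystem $R_+$, and let $G\subset O(m)$ be the finite reflection group generated by the reflections $r_\alpha(x)=x-2\frac{\langle\alpha,x\rangle}{|\alpha|^2}\alpha$, $\alpha\in R$. Let $\kappa:R\to\mathbb{C}$ be a $G$-invariant multiplicity function, $\kappa_\alpha=\kappa(\alpha)$. The Dunkl operators are $T_i f(x)=\partial_{x_i}f(x)+\sum_{\alpha\in R_+}\kappa_\alpha\alpha_i\frac{f(x)-f(r_\alpha x)}{\langle\alpha,x\rangle}$, $i=1,\dots,m$; they commute. The Dunkl Laplacian is $\Delta_\kappa=\sum_{i=1}^m T_i^2$. Put $\gamma=\sum_{\alpha\in R_+}\kappa_\alpha$ and $\mu=m+2\gamma$. $\mathbb{E}=\sum_{i=1}^m x_i\partial_{x_i}$ is the Euler operator. $\mathcal{P}_k$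 denotes real homogeneous polynomials of degree $k$ on $\mathbb{R}^m$ and $\mathcal{H}_k=\mathcal{P}_k\cap\ker\Delta_\kappa$. Let $\mathcal{C}l_{0,m}$ be the Clifford algebra generated by $e_1,\dots,e_m$ with $e_ie_j+e_je_i=-2\delta_{ij}$. Set $\underline{x}=\sum_i e_ix_i$, $D_\kappa=\sum_i e_iT_i$, and $D_+=-D_\kappa+2\underline{x}$. The Clifford--Hermite polynomial of degree $2t$ associated with $H_k\in\mathcal{H}_k$ is $C\!H_{2t}^{\mu}(H_k)=(D_+)^{2t}H_k$; it has the form $\phi_{2t,k}^{\mu}(|x|^2)H_k$ for a polynomial $\phi_{2t,k}^{\mu}$ in one variable depending only on $t,k,\mu$. *)

theory Defs
  imports "HOL-Analysis.Analysis"
begin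

definition refl :: "real^'n \<Rightarrow> real^'n \<Rightarrow> real^'n" where
  "refl \<alpha> x = x - (2 * (\<alpha> \<bullet> x) / (\<alpha> \<bullet> \<alpha>)) *\<^sub>R \<alpha>"

text \<open>Reduced root system (Dunkl's convention, not necessarily crystallographic),
  normalized so that every root has squared length 2.\<close>
definition normalized_root_system :: "(real^'n) set \<Rightarrow> bool" where
  "normalized_root_system R \<longleftrightarrow>
     finite R \<and> 0 \<notin> R \<and>
     (\<forall>\<alpha>\<in>R. \<forall>\<beta>\<in>R. refl \<alpha> \<beta> \<in> R) \<and>
     (\<forall>\<alpha>\<in>R. \<forall>c::real. c *\<^sub>R \<alpha> \<in> R \<longrightarrow> c = 1 \<or> c = -1) \<and>
     (\<forall>\<alpha>\<in>R. \<alpha> \<bullet> \<alpha> = 2)"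

definition positive_subsystem :: "(real^'n) set \<Rightarrow> (real^'n) set \<Rightarrow> bool" where
  "positive_subsystem R Rp \<longleftrightarrow>
     (\<exists>\<beta>. (\<forall>\<alpha>\<in>R. \<alpha> \<bullet> \<beta> \<noteq> 0) \<and> Rp = {\<alpha>\<in>R. \<alpha> \<bullet> \<beta> > 0})"

inductive_set refl_group :: "(real^'n) set \<Rightarrow> (real^'n \<Rightarrow> real^'n) set" for R where
  id_in: "id \<in> refl_group R"
| step: "g \<in> refl_group R \<Longrightarrow> \<alpha> \<in> R \<Longrightarrow> (refl \<alpha> \<circ> g) \<in> refl_group R"

definition G_invariant :: "(real^'n) set \<Rightarrow> (real^'n \<Rightarrow> complex) \<Rightarrow> bool" where
  "G_invariant R \<kappa> \<longleftrightarrow> (\<forall>g\<in>refl_group R. \<forall>\<alpha>\<in>R. \<kappa> (g \<alpha>) = \<kappa> \<alpha>)"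

definition partial :: "'n \<Rightarrow> (real^'n \<Rightarrow> complex) \<Rightarrow> real^'n \<Rightarrow> complex" where
  "partial i f x = vector_derivative (\<lambda>s::real. f (x + s *\<^sub>R axis i 1)) (at 0)"

definition dir_deriv :: "real^'n \<Rightarrow> (real^'n \<Rightarrow> complex) \<Rightarrow> real^'n \<Rightarrow> complex" where
  "dir_deriv v f x = vector_derivative (\<lambda>s::real. f (x + s *\<^sub>R v)) (at 0)"

text \<open>Difference quotient of the Dunkl operator; on the hyperplane \<open>\<langle>\<alpha>,x\<rangle> = 0\<close>
  it is given its continuous extension (the directional derivative along \<alpha>,
  using \<open>|\<alpha>|^2 = 2\<close>).\<close>
definition dquot :: "real^'n \<Rightarrow> (real^'n \<Rightarrow> complex) \<Rightarrow> real^'n \<Rightarrow> complex" where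
  "dquot \<alpha> f x = (if \<alpha> \<bullet> x = 0 then dir_deriv \<alpha> f x
                   else (f x - f (refl \<alpha> x)) / complex_of_real (\<alpha> \<bullet> x))"

definition dunkl :: "(real^'n) set \<Rightarrow> (real^'n \<Rightarrow> complex) \<Rightarrow> 'n
                     \<Rightarrow> (real^'n \<Rightarrow> complex) \<Rightarrow> real^'n \<Rightarrow> complex" where
  "dunkl Rp \<kappa> i f x = partial i f x +
     (\<Sum>\<alpha>\<in>Rp. \<kappa> \<alpha> * complex_of_real (\<alpha> $ i) * dquot \<alpha> f x)"

definition dunkl_laplacian :: "(real^'n) set \<Rightarrow> (real^'n \<Rightarrow> complex)
                     \<Rightarrow> (real^'n \<Rightarrow> complex) \<Rightarrow> real^'n \<Rightarrow> complex" where
  "dunkl_laplacian Rp \<kappa> f x = (\<Sum>i\<in>UNIV. dunkl Rp \<kappa> i (dunkl Rp \<kappa> i f) x)"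

definition hom_poly :: "nat \<Rightarrow> (real^'n \<Rightarrow> real) \<Rightarrow> bool" where
  "hom_poly k f \<longleftrightarrow> (\<exists>c :: ('n \<Rightarrow> nat) \<Rightarrow> real.
     f = (\<lambda>x. \<Sum>a\<in>{a :: 'n \<Rightarrow> nat. sum a UNIV = k}. c a * (\<Prod>i\<in>UNIV. (x $ i) ^ a i)))"

definition dunkl_harmonic :: "(real^'n) set \<Rightarrow> (real^'n \<Rightarrow> complex) \<Rightarrow> nat
                              \<Rightarrow> (real^'n \<Rightarrow> real) \<Rightarrow> bool" where
  "dunkl_harmonic Rp \<kappa> k H \<longleftrightarrow> hom_poly k H \<and>
     (\<forall>x. dunkl_laplacian Rp \<kappa> (\<lambda>y. complex_of_real (H y)) x = 0)"

text \<open>An element is a coefficient function on the basis blades \<open>e_A\<close>, \<open>A \<subseteq> 'n\<close>,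
  with \<open>e_A = e_{a1} ... e_{ak}\<close> for \<open>a1 < ... < ak\<close>.\<close>
type_synonym 'n clif = "'n set \<Rightarrow> complex"

text \<open>\<open>e_i e_A = clif_sign i A e_{A \<triangle> {i}}\<close>, using \<open>e_i e_j = - e_j e_i\<close> (i \<noteq> j), \<open>e_i^2 = -1\<close>.\<close>
definition clif_sign :: "'n::linorder \<Rightarrow> 'n set \<Rightarrow> complex" where
  "clif_sign i A = (-1) ^ card {j\<in>A. j < i} * (if i \<in> A then -1 else 1)"

definition symdiff1 :: "'n set \<Rightarrow> 'n \<Rightarrow> 'n set" where
  "symdiff1 B i = (if i \<in> B then B - {i} else insert i B)"

definition e_mult :: "'n::linorder \<Rightarrow> 'n clif \<Rightarrow> 'n clif" where
  "e_mult i u = (\<lambda>B. clif_sign i (symdiff1 B i) * u (symdiff1 B i))"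

definition scal :: "complex \<Rightarrow> 'n clif" where
  "scal c = (\<lambda>A. if A = {} then c else 0)"

definition cmult :: "complex \<Rightarrow> 'n clif \<Rightarrow> 'n clif" where
  "cmult c u = (\<lambda>A. c * u A)"

definition dunkl_clif :: "(real^'n) set \<Rightarrow> (real^'n \<Rightarrow> complex) \<Rightarrow> 'n
                  \<Rightarrow> (real^'n \<Rightarrow> 'n clif) \<Rightarrow> real^'n \<Rightarrow> 'n clif" where
  "dunkl_clif Rp \<kappa> i F x = (\<lambda>A. dunkl Rp \<kappa> i (\<lambda>y. F y A) x)"

definition dirac :: "(real^('n::{finite,linorder})) set \<Rightarrow> (real^('n::{finite,linorder}) \<Rightarrow> complex)
                  \<Rightarrow> (real^('n::{finite,linorder}) \<Rightarrow> ('n::{finite,linorder}) clif) \<Rightarrow> real^('n::{finite,linorder}) \<Rightarrow> ('n::{finite,linorder}) clif" where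
  "dirac Rp \<kappa> F x = (\<lambda>A. \<Sum>i\<in>UNIV. e_mult i (dunkl_clif Rp \<kappa> i F x) A)"

definition D_plus :: "(real^('n::{finite,linorder})) set \<Rightarrow> (real^('n::{finite,linorder}) \<Rightarrow> complex)
                  \<Rightarrow> (real^('n::{finite,linorder}) \<Rightarrow> ('n::{finite,linorder}) clif) \<Rightarrow> real^('n::{finite,linorder}) \<Rightarrow> ('n::{finite,linorder}) clif" where
  "D_plus Rp \<kappa> F x = (\<lambda>A. - dirac Rp \<kappa> F x A +
      2 * (\<Sum>i\<in>UNIV. complex_of_real (x $ i) * e_mult i (F x) A))"

text \<open>The Gamma ratio \<open>\<Gamma>(t+a+1)/\<Gamma>(i+a+1)\<close> is written as the Pochhammer symbol
  \<open>(i+a+1)_(t-i)\<close>, its polynomial continuation in \<open>a\<close>.\<close>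
definition laguerre :: "nat \<Rightarrow> complex \<Rightarrow> complex \<Rightarrow> complex" where
  "laguerre t a x = (\<Sum>i\<le>t. pochhammer (of_nat i + a + 1) (t - i)
                              / (fact i * fact (t - i)) * (- x) ^ i)"

end

theory Submission
  imports Defs "HOL-Computational_Algebra.Polynomial"
begin

text \<open>On polynomials the Dunkl operators commute, and they satisfy a Leibniz rule against a
  coordinate \<open>x\<^sub>l\<close> with a correction term involving the reflections. Together with the Clifford
  relations \<open>e\<^sub>ie\<^sub>j + e\<^sub>je\<^sub>i = -2\<delta>\<^sub>i\<^sub>j\<close> this shows that \<open>D\<^sub>+\<^sup>2\<close> acts componentwise as the scalar operator
  \<open>-\<Delta>\<^sub>\<kappa> + 4\<bbbE> + 2\<mu> - 4|x|\<^sup>2\<close>. On a product \<open>f(|x|\<^sup>2) H\<^sub>k\<close> with \<open>H\<^sub>k\<close> Dunkl-harmonic and homogeneous,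
  this operator acts on \<open>f\<close> as the ordinary differential operator
  \<open>f \<mapsto> -4zf'' - 4(a+1)f' + 8zf' + 4(a+1)f - 4zf\<close>, \<open>a = \<mu>/2 + k - 1\<close>, and a comparison of
  coefficients shows that it maps \<open>4\<^sup>t t! L\<^sub>t\<^sup>a\<close> to \<open>4\<^sup>t\<^sup>+\<^sup>1 (t+1)! L\<^sub>t\<^sub>+\<^sub>1\<^sup>a\<close>.\<close>

inductive_set poly_fun :: "(real^'n \<Rightarrow> complex) set" where
  poly_fun_const: "(\<lambda>x. c) \<in> poly_fun"
| poly_fun_coord: "(\<lambda>x. complex_of_real (x $ j)) \<in> poly_fun"
| poly_fun_add: "f \<in> poly_fun \<Longrightarrow> g \<in> poly_fun \<Longrightarrow> (\<lambda>x. f x + g x) \<in> poly_fun"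
| poly_fun_mult: "f \<in> poly_fun \<Longrightarrow> g \<in> poly_fun \<Longrightarrow> (\<lambda>x. f x * g x) \<in> poly_fun"

lemma poly_fun_cmult: "f \<in> poly_fun \<Longrightarrow> (\<lambda>x. c * f x) \<in> poly_fun"
  using poly_fun_mult[OF poly_fun_const] by blast

lemma poly_fun_uminus: "f \<in> poly_fun \<Longrightarrow> (\<lambda>x. - f x) \<in> poly_fun"
  using poly_fun_cmult[of f "-1"] by simp

lemma poly_fun_diff: "f \<in> poly_fun \<Longrightarrow> g \<in> poly_fun \<Longrightarrow> (\<lambda>x. f x - g x) \<in> poly_fun"
  using poly_fun_add[OF _ poly_fun_uminus, of f g] by simp

lemma poly_fun_sum:
  "finite I \<Longrightarrow> (\<And>i. i \<in> I \<Longrightarrow> f i \<in> poly_fun) \<Longrightarrow> (\<lambda>x. \<Sum>i\<in>I. f i x) \<in> poly_fun"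
  by (induction I rule: finite_induct) (auto intro: poly_fun_const poly_fun_add)

lemma poly_fun_prod:
  "finite I \<Longrightarrow> (\<And>i. i \<in> I \<Longrightarrow> f i \<in> poly_fun) \<Longrightarrow> (\<lambda>x. \<Prod>i\<in>I. f i x) \<in> poly_fun"
  by (induction I rule: finite_induct) (auto intro: poly_fun_const poly_fun_mult)

lemma poly_fun_power: "f \<in> poly_fun \<Longrightarrow> (\<lambda>x. f x ^ n) \<in> poly_fun"
  by (induction n) (auto intro: poly_fun_const poly_fun_mult)

lemma poly_fun_inner: "(\<lambda>x. complex_of_real (a \<bullet> x)) \<in> poly_fun"
proof -
  have "(\<lambda>x. \<Sum>i\<in>UNIV. complex_of_real (a $ i) * complex_of_real (x $ i)) \<in> poly_fun"
    by (rule poly_fun_sum) (auto intro: poly_fun_cmult poly_fun_coord)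
  then show ?thesis by (simp add: inner_vec_def)
qed

lemma poly_fun_compose_coordwise:
  assumes "f \<in> poly_fun" and "\<And>j. (\<lambda>x. complex_of_real (L x $ j)) \<in> poly_fun"
  shows "(\<lambda>x. f (L x)) \<in> poly_fun"
  using assms(1) by induction (auto intro: poly_fun.intros assms(2))

lemma poly_fun_compose_refl: "f \<in> poly_fun \<Longrightarrow> (\<lambda>x. f (refl a x)) \<in> poly_fun"
proof (erule poly_fun_compose_coordwise)
  fix j
  have "(\<lambda>x. complex_of_real (x $ j) - complex_of_real (2 * (a $ j) / (a \<bullet> a)) * complex_of_real (a \<bullet> x))
          \<in> poly_fun"
    by (intro poly_fun_diff poly_fun_cmult poly_fun_coord poly_fun_inner)
  then show "(\<lambda>x. complex_of_real (refl a x $ j)) \<in> poly_fun"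
    by (simp add: refl_def algebra_simps)
qed

text \<open>Dunkl operators satisfy no Leibniz rule for general products, so their commutativity is
  proved by induction over this Horner-type generation of polynomials.\<close>

inductive_set poly_fun_horner :: "(real^'n \<Rightarrow> complex) set" where
  "(\<lambda>x. c) \<in> poly_fun_horner"
| "f \<in> poly_fun_horner \<Longrightarrow> (\<lambda>x. complex_of_real (x $ l) * f x) \<in> poly_fun_horner"
| "f \<in> poly_fun_horner \<Longrightarrow> g \<in> poly_fun_horner \<Longrightarrow> (\<lambda>x. f x + g x) \<in> poly_fun_horner"

lemma poly_fun_horner_mult:
  assumes "f \<in> poly_fun_horner" "g \<in> poly_fun_horner"
  shows "(\<lambda>x. f x * g x) \<in> poly_fun_horner"
  using assms(1)
proof induction
  case (1 c)
  from assms(2) show ?case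
  proof induction
    case (2 f l)
    then show ?case
      using poly_fun_horner.intros(2)[OF "2.IH", of l] by (simp add: mult.left_commute)
  qed (auto simp: distrib_left intro: poly_fun_horner.intros)
next
  case (2 f l)
  then show ?case using poly_fun_horner.intros(2)[OF "2.IH"] by (simp add: mult.assoc)
next
  case (3 f1 f2)
  then show ?case using poly_fun_horner.intros(3)[OF "3.IH"] by (simp add: distrib_right)
qed

lemma poly_fun_eq_horner: "poly_fun = poly_fun_horner"
proof (intro set_eqI iffI)
  fix f :: "real^'n \<Rightarrow> complex"
  assume "f \<in> poly_fun"
  then show "f \<in> poly_fun_horner"
  proof induction
    case (poly_fun_coord j)
    then show ?case using poly_fun_horner.intros(2)[OF poly_fun_horner.intros(1), of j 1] by simp
  qed (auto intro: poly_fun_horner.intros poly_fun_horner_mult)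
next
  fix f :: "real^'n \<Rightarrow> complex"
  assume "f \<in> poly_fun_horner"
  then show "f \<in> poly_fun" by induction (auto intro: poly_fun.intros)
qed

lemma poly_fun_horner_induct [consumes 1, case_names const coord_mult add]:
  assumes "f \<in> poly_fun"
    and "\<And>c. P (\<lambda>x. c)"
    and "\<And>f l. f \<in> poly_fun \<Longrightarrow> P f \<Longrightarrow> P (\<lambda>x. complex_of_real (x $ l) * f x)"
    and "\<And>f g. f \<in> poly_fun \<Longrightarrow> g \<in> poly_fun \<Longrightarrow> P f \<Longrightarrow> P g \<Longrightarrow> P (\<lambda>x. f x + g x)"
  shows "P f"
  using assms(1) unfolding poly_fun_eq_horner
  by induction (auto intro: assms(2-4) simp: poly_fun_eq_horner)

lemma dir_deriv_eqI:
  "((\<lambda>s. f (x + s *\<^sub>R v)) has_vector_derivative d) (at 0) \<Longrightarrow> dir_deriv v f x = d"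
  unfolding dir_deriv_def by (rule vector_derivative_at)

lemma has_vector_derivative_coord:
  "((\<lambda>s. complex_of_real ((x + s *\<^sub>R v) $ j)) has_vector_derivative complex_of_real (v $ j)) (at 0)"
proof -
  have "((\<lambda>s. complex_of_real (x $ j + s * v $ j)) has_vector_derivative complex_of_real (v $ j)) (at 0)"
    by (rule has_vector_derivative_of_real) (auto intro!: derivative_eq_intros)
  then show ?thesis by simp
qed

lemma poly_fun_has_dir_deriv:
  assumes "f \<in> poly_fun"
  shows "\<exists>d\<in>poly_fun. \<forall>x. ((\<lambda>s. f (x + s *\<^sub>R v)) has_vector_derivative d x) (at 0)"
  using assms
proof induction
  case (poly_fun_const c)
  show ?case by (intro bexI[of _ "\<lambda>x. 0"]) (auto intro: poly_fun.intros)
next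
  case (poly_fun_coord j)
  show ?case
    by (intro bexI[of _ "\<lambda>x. complex_of_real (v $ j)"] allI has_vector_derivative_coord poly_fun.intros)
next
  case (poly_fun_add f g)
  then obtain df dg where "df \<in> poly_fun" "dg \<in> poly_fun"
    "\<And>x. ((\<lambda>s. f (x + s *\<^sub>R v)) has_vector_derivative df x) (at 0)"
    "\<And>x. ((\<lambda>s. g (x + s *\<^sub>R v)) has_vector_derivative dg x) (at 0)" by blast
  then show ?case
    by (intro bexI[of _ "\<lambda>x. df x + dg x"]) (auto intro: has_vector_derivative_add poly_fun.intros)
next
  case (poly_fun_mult f g)
  then obtain df dg where d: "df \<in> poly_fun" "dg \<in> poly_fun"
    and df: "\<And>x. ((\<lambda>s. f (x + s *\<^sub>R v)) has_vector_derivative df x) (at 0)"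
    and dg: "\<And>x. ((\<lambda>s. g (x + s *\<^sub>R v)) has_vector_derivative dg x) (at 0)" by blast
  show ?case
  proof (intro bexI[of _ "\<lambda>x. f x * dg x + df x * g x"] allI)
    show "(\<lambda>x. f x * dg x + df x * g x) \<in> poly_fun"
      using poly_fun_mult d by (auto intro: poly_fun.intros)
    show "((\<lambda>s. f (x + s *\<^sub>R v) * g (x + s *\<^sub>R v)) has_vector_derivative f x * dg x + df x * g x) (at 0)"
      for x using has_vector_derivative_mult[OF df dg] by simp
  qed
qed

lemma has_vector_derivative_dir_deriv:
  "f \<in> poly_fun \<Longrightarrow> ((\<lambda>s. f (x + s *\<^sub>R v)) has_vector_derivative dir_deriv v f x) (at 0)"
  using poly_fun_has_dir_deriv[of f v] dir_deriv_eqI by metis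

lemma poly_fun_dir_deriv: "f \<in> poly_fun \<Longrightarrow> (\<lambda>x. dir_deriv v f x) \<in> poly_fun"
  using poly_fun_has_dir_deriv[of f v] dir_deriv_eqI by (metis (no_types, lifting) ext)

lemma dir_deriv_const [simp]: "dir_deriv v (\<lambda>x. c) x = 0"
  by (rule dir_deriv_eqI) simp

lemma dir_deriv_coord: "dir_deriv v (\<lambda>x. complex_of_real (x $ j)) x = complex_of_real (v $ j)"
  by (rule dir_deriv_eqI, rule has_vector_derivative_coord)

lemma dir_deriv_add:
  "f \<in> poly_fun \<Longrightarrow> g \<in> poly_fun \<Longrightarrow>
     dir_deriv v (\<lambda>x. f x + g x) x = dir_deriv v f x + dir_deriv v g x"
  by (rule dir_deriv_eqI) (auto intro: has_vector_derivative_add has_vector_derivative_dir_deriv)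

lemma dir_deriv_mult:
  "f \<in> poly_fun \<Longrightarrow> g \<in> poly_fun \<Longrightarrow>
     dir_deriv v (\<lambda>x. f x * g x) x = dir_deriv v f x * g x + f x * dir_deriv v g x"
  by (rule dir_deriv_eqI)
    (use has_vector_derivative_mult[OF has_vector_derivative_dir_deriv has_vector_derivative_dir_deriv]
      in \<open>simp add: algebra_simps\<close>)

lemma dir_deriv_cmult: "f \<in> poly_fun \<Longrightarrow> dir_deriv v (\<lambda>x. c * f x) x = c * dir_deriv v f x"
  by (simp add: dir_deriv_mult poly_fun_const)

lemma dir_deriv_add_dir:
  "f \<in> poly_fun \<Longrightarrow> dir_deriv (v + w) f x = dir_deriv v f x + dir_deriv w f x"
  by (induction rule: poly_fun.induct) (simp_all add: dir_deriv_coord dir_deriv_add dir_deriv_mult algebra_simps)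

lemma dir_deriv_scaleR_dir:
  "f \<in> poly_fun \<Longrightarrow> dir_deriv (c *\<^sub>R v) f x = complex_of_real c * dir_deriv v f x"
  by (induction rule: poly_fun.induct) (simp_all add: dir_deriv_coord dir_deriv_add dir_deriv_mult algebra_simps)

lemma dir_deriv_diff_dir:
  "f \<in> poly_fun \<Longrightarrow> dir_deriv (v - w) f x = dir_deriv v f x - dir_deriv w f x"
  using dir_deriv_add_dir[of f v "-w" x] dir_deriv_scaleR_dir[of f "-1" w x] by simp

lemma dir_deriv_compose_linear:
  "linear L \<Longrightarrow> dir_deriv v (\<lambda>y. f (L y)) x = dir_deriv (L v) f (L x)"
  unfolding dir_deriv_def by (simp add: linear_add linear_scale)

lemma refl_linear: "linear (refl a)"
  by (rule linearI) (simp_all add: refl_def inner_add_right add_divide_distrib scaleR_add_left algebra_simps)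

lemma refl_scaleR: "refl a (c *\<^sub>R x) = c *\<^sub>R refl a x"
  using refl_linear linear_scale by blast

lemma refl_uminus: "refl a (- x) = - refl a x"
  using refl_linear linear_neg by blast

lemma refl_diff: "refl a (x - y) = refl a x - refl a y"
  using refl_linear linear_diff by blast

lemma refl_refl: "a \<bullet> a \<noteq> 0 \<Longrightarrow> refl a (refl a x) = x"
  unfolding refl_def by (simp add: inner_diff_right algebra_simps)

lemma inner_refl_left: "refl a x \<bullet> y = x \<bullet> refl a y"
  unfolding refl_def by (simp add: inner_diff_right inner_diff_left algebra_simps inner_commute)

lemma inner_refl_refl: "a \<bullet> a \<noteq> 0 \<Longrightarrow> refl a x \<bullet> refl a y = x \<bullet> y"
  by (simp add: inner_refl_left refl_refl)

lemma refl_self: "a \<bullet> a \<noteq> 0 \<Longrightarrow> refl a a = - a"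
  unfolding refl_def by (simp add: scaleR_2)

lemma refl_fixed: "a \<bullet> x = 0 \<Longrightarrow> refl a x = x"
  unfolding refl_def by simp

lemma refl_uminus_root: "refl (- a) = refl a"
  unfolding refl_def by (auto simp: fun_eq_iff)

lemma refl_refl_conj:
  assumes "b \<bullet> b \<noteq> 0"
  shows "refl b (refl a x) = refl (refl b a) (refl b x)"
proof -
  have "refl (refl b a) (refl b x)
      = refl b x - (2 * (refl b a \<bullet> refl b x) / (refl b a \<bullet> refl b a)) *\<^sub>R refl b a"
    unfolding refl_def[of "refl b a"] ..
  also have "\<dots> = refl b x - (2 * (a \<bullet> x) / (a \<bullet> a)) *\<^sub>R refl b a"
    using assms by (simp add: inner_refl_refl)
  also have "\<dots> = refl b (refl a x)"
    by (simp add: refl_def[of a] refl_diff refl_scaleR)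
  finally show ?thesis by simp
qed

lemma refl_root_norm2: "a \<bullet> a = 2 \<Longrightarrow> refl a x = x - (a \<bullet> x) *\<^sub>R a"
  unfolding refl_def by simp

definition norm2 :: "real^'n \<Rightarrow> complex" where
  "norm2 x = complex_of_real ((norm x)\<^sup>2)"

lemma poly_fun_norm2: "norm2 \<in> poly_fun"
proof -
  have "(\<lambda>x. \<Sum>i\<in>UNIV. complex_of_real (x $ i) * complex_of_real (x $ i)) \<in> poly_fun"
    by (rule poly_fun_sum) (auto intro: poly_fun_mult poly_fun_coord)
  then show ?thesis by (simp add: norm2_def[abs_def] power2_norm_eq_inner inner_vec_def)
qed

lemma norm2_refl: "a \<bullet> a \<noteq> 0 \<Longrightarrow> norm2 (refl a x) = norm2 x"
  unfolding norm2_def by (simp add: power2_norm_eq_inner inner_refl_refl)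

lemma dir_deriv_norm2: "dir_deriv v norm2 x = complex_of_real (2 * (v \<bullet> x))"
proof (rule dir_deriv_eqI)
  have "(\<lambda>s. (x + s *\<^sub>R v) \<bullet> (x + s *\<^sub>R v)) = (\<lambda>s. x \<bullet> x + s * (2 * (v \<bullet> x)) + s\<^sup>2 * (v \<bullet> v))"
    by (auto simp: fun_eq_iff inner_add_left inner_add_right inner_commute power2_eq_square algebra_simps)
  moreover have "((\<lambda>s. x \<bullet> x + s * (2 * (v \<bullet> x)) + s\<^sup>2 * (v \<bullet> v)) has_real_derivative 2 * (v \<bullet> x)) (at 0)"
    by (auto intro!: derivative_eq_intros)
  ultimately have "((\<lambda>s. complex_of_real ((x + s *\<^sub>R v) \<bullet> (x + s *\<^sub>R v)))
      has_vector_derivative complex_of_real (2 * (v \<bullet> x))) (at 0)"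
    by (intro has_vector_derivative_of_real) simp
  then show "((\<lambda>s. norm2 (x + s *\<^sub>R v)) has_vector_derivative complex_of_real (2 * (v \<bullet> x))) (at 0)"
    by (simp add: norm2_def power2_norm_eq_inner)
qed

lemma dquot_const [simp]: "dquot a (\<lambda>x. c) x = 0"
  unfolding dquot_def by simp

lemma dquot_coord:
  "a \<bullet> a = 2 \<Longrightarrow> dquot a (\<lambda>x. complex_of_real (x $ j)) x = complex_of_real (a $ j)"
  unfolding dquot_def by (auto simp: dir_deriv_coord refl_root_norm2 field_simps)

lemma dquot_add:
  "f \<in> poly_fun \<Longrightarrow> g \<in> poly_fun \<Longrightarrow> dquot a (\<lambda>x. f x + g x) x = dquot a f x + dquot a g x"
  unfolding dquot_def by (auto simp: dir_deriv_add field_simps)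

lemma dquot_mult:
  "f \<in> poly_fun \<Longrightarrow> g \<in> poly_fun \<Longrightarrow>
     dquot a (\<lambda>x. f x * g x) x = dquot a f x * g x + f (refl a x) * dquot a g x"
  unfolding dquot_def by (auto simp: dir_deriv_mult refl_fixed field_simps)

lemma dquot_cmult: "f \<in> poly_fun \<Longrightarrow> dquot a (\<lambda>x. c * f x) x = c * dquot a f x"
  by (simp add: dquot_mult poly_fun_const)

lemma poly_fun_dquot:
  assumes "f \<in> poly_fun" "a \<bullet> a = 2"
  shows "(\<lambda>x. dquot a f x) \<in> poly_fun"
  using assms(1)
  by induction
    (simp_all add: assms(2) dquot_coord dquot_add dquot_mult poly_fun.intros poly_fun_compose_refl)

lemma dquot_uminus_root: "f \<in> poly_fun \<Longrightarrow> dquot (- a) f x = - dquot a f x"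
  using dir_deriv_scaleR_dir[of f "-1" a x]
  unfolding dquot_def by (auto simp: refl_uminus_root field_simps)

lemma dquot_compose_refl:
  assumes "b \<bullet> b \<noteq> 0"
  shows "dquot c (\<lambda>y. f (refl b y)) x = dquot (refl b c) f (refl b x)"
  using inner_refl_refl[OF assms, of c x] refl_refl_conj[OF assms]
  unfolding dquot_def by (simp add: dir_deriv_compose_linear[OF refl_linear])

lemma dquot_norm2: "a \<bullet> a \<noteq> 0 \<Longrightarrow> dquot a norm2 x = 0"
  unfolding dquot_def by (simp add: dir_deriv_norm2 norm2_refl)

lemma inner_mult_dquot: "a \<bullet> a = 2 \<Longrightarrow> complex_of_real (a \<bullet> x) * dquot a f x = f x - f (refl a x)"
  unfolding dquot_def by (auto simp: refl_fixed)

locale dunkl_setting =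
  fixes R Rp :: "(real^('n::{finite,linorder})) set" and \<kappa> :: "real^('n::{finite,linorder}) \<Rightarrow> complex"
  assumes root_system: "normalized_root_system R"
    and positive: "positive_subsystem R Rp"
    and invariant: "G_invariant R \<kappa>"
begin

lemma finite_roots: "finite R"
  using root_system unfolding normalized_root_system_def by blast

lemma inner_root_self: "a \<in> R \<Longrightarrow> a \<bullet> a = 2"
  using root_system unfolding normalized_root_system_def by blast

lemma inner_root_self_nonzero: "a \<in> R \<Longrightarrow> a \<bullet> a \<noteq> 0"
  using inner_root_self by simp

lemma refl_root: "a \<in> R \<Longrightarrow> b \<in> R \<Longrightarrow> refl a b \<in> R"
  using root_system unfolding normalized_root_system_def by blast

lemma uminus_root: "a \<in> R \<Longrightarrow> - a \<in> R"
  using refl_root[of a a] refl_self[OF inner_root_self_nonzero] by simp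

lemma kappa_refl: "a \<in> R \<Longrightarrow> b \<in> R \<Longrightarrow> \<kappa> (refl a b) = \<kappa> b"
  using invariant refl_group.step[OF refl_group.id_in, of a R]
  unfolding G_invariant_def by fastforce

lemma kappa_uminus: "a \<in> R \<Longrightarrow> \<kappa> (- a) = \<kappa> a"
  using kappa_refl[of a a] refl_self[OF inner_root_self_nonzero] by simp

lemma positive_subset: "Rp \<subseteq> R"
  using positive unfolding positive_subsystem_def by blast

lemma finite_positive: "finite Rp"
  using positive_subset finite_roots finite_subset by blast

lemma inner_positive_self: "b \<in> Rp \<Longrightarrow> b \<bullet> b = 2"
  using positive_subset inner_root_self by blast

lemma roots_eq_positive_union_negative: "R = Rp \<union> uminus ` Rp" "Rp \<inter> uminus ` Rp = {}"
proof -
  obtain \<beta> where \<beta>: "\<forall>a\<in>R. a \<bullet> \<beta> \<noteq> 0" "Rp = {a\<in>R. a \<bullet> \<beta> > 0}"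
    using positive unfolding positive_subsystem_def by blast
  have "a \<in> Rp \<union> uminus ` Rp" if a: "a \<in> R" for a
  proof (cases "a \<bullet> \<beta> > 0")
    case True
    then show ?thesis using \<beta> a by simp
  next
    case False
    then have "(- a) \<bullet> \<beta> > 0" using \<beta> a by (auto simp: inner_minus_left)
    then have "- a \<in> Rp" using \<beta> uminus_root[OF a] by simp
    then show ?thesis by (auto intro: image_eqI[of _ _ "- a"])
  qed
  then show "R = Rp \<union> uminus ` Rp" using positive_subset uminus_root by auto
  show "Rp \<inter> uminus ` Rp = {}"
  proof (rule equals0I)
    fix a assume "a \<in> Rp \<inter> uminus ` Rp"
    then obtain c where "a \<in> Rp" "c \<in> Rp" "a = - c" by blast
    then show False using \<beta> by (simp add: inner_minus_left)
  qed
qed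

lemma sum_roots_even:
  fixes h :: "_ \<Rightarrow> complex"
  assumes h: "\<And>b. b \<in> R \<Longrightarrow> h (- b) = h b"
  shows "(\<Sum>b\<in>R. h b) = 2 * (\<Sum>b\<in>Rp. h b)"
proof -
  have inj: "inj_on uminus Rp" by (rule inj_onI) simp
  have "(\<Sum>b\<in>R. h b) = (\<Sum>b\<in>Rp \<union> uminus ` Rp. h b)"
    by (subst roots_eq_positive_union_negative(1)) (rule refl)
  also have "\<dots> = (\<Sum>b\<in>Rp. h b) + (\<Sum>b\<in>uminus ` Rp. h b)"
    by (rule sum.union_disjoint[OF finite_positive finite_imageI[OF finite_positive]
          roots_eq_positive_union_negative(2)])
  also have "(\<Sum>b\<in>uminus ` Rp. h b) = (\<Sum>b\<in>Rp. h (- b))"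
    using sum.reindex[OF inj, of h] unfolding comp_def .
  also have "\<dots> = (\<Sum>b\<in>Rp. h b)"
    using h positive_subset by (intro sum.cong) auto
  finally show ?thesis by (simp only: mult_2)
qed

lemma sum_roots_reindex_refl:
  assumes "a \<in> R"
  shows "(\<Sum>b\<in>R. g (refl a b)) = (\<Sum>b\<in>R. g b)"
proof -
  have "bij_betw (refl a) R R"
    by (rule bij_betw_byWitness[where f'="refl a"])
      (use refl_refl[OF inner_root_self_nonzero[OF assms]] refl_root[OF assms] in auto)
  then show ?thesis by (rule sum.reindex_bij_betw)
qed

text \<open>The Dunkl operator \<open>T\<^sub>v = \<Sum>\<^sub>i v\<^sub>i T\<^sub>i\<close> in an arbitrary direction \<open>v\<close>; reflections permute the
  directions, so this is the form in which equivariance can be stated.\<close>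

definition dunkl_dir where
  "dunkl_dir v f x = dir_deriv v f x + (\<Sum>b\<in>Rp. \<kappa> b * complex_of_real (b \<bullet> v) * dquot b f x)"

lemma dunkl_eq_dunkl_dir: "dunkl Rp \<kappa> i = dunkl_dir (axis i 1)"
  unfolding dunkl_def dunkl_dir_def partial_def dir_deriv_def by (simp add: inner_axis fun_eq_iff)

lemma poly_fun_dunkl_dir: "f \<in> poly_fun \<Longrightarrow> (\<lambda>x. dunkl_dir v f x) \<in> poly_fun"
  unfolding dunkl_dir_def
  by (intro poly_fun_add poly_fun_dir_deriv poly_fun_sum finite_positive poly_fun_cmult
      poly_fun_dquot inner_positive_self)

lemma dunkl_dir_const [simp]: "dunkl_dir v (\<lambda>x. c) = (\<lambda>x. 0)"
  unfolding dunkl_dir_def by (simp add: fun_eq_iff)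

lemma dunkl_dir_add:
  "f \<in> poly_fun \<Longrightarrow> g \<in> poly_fun \<Longrightarrow> dunkl_dir v (\<lambda>x. f x + g x) x = dunkl_dir v f x + dunkl_dir v g x"
  unfolding dunkl_dir_def by (simp add: dir_deriv_add dquot_add sum.distrib algebra_simps)

lemma dunkl_dir_cmult: "f \<in> poly_fun \<Longrightarrow> dunkl_dir v (\<lambda>x. c * f x) x = c * dunkl_dir v f x"
  unfolding dunkl_dir_def by (simp add: dir_deriv_cmult dquot_cmult sum_distrib_left algebra_simps)

lemma dunkl_dir_sum:
  "finite I \<Longrightarrow> (\<And>i. i \<in> I \<Longrightarrow> f i \<in> poly_fun) \<Longrightarrow>
     dunkl_dir v (\<lambda>x. \<Sum>i\<in>I. f i x) x = (\<Sum>i\<in>I. dunkl_dir v (f i) x)"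
  by (induction I rule: finite_induct) (simp_all add: dunkl_dir_add poly_fun_sum)

lemma dunkl_dir_add_dir: "f \<in> poly_fun \<Longrightarrow> dunkl_dir (v + w) f x = dunkl_dir v f x + dunkl_dir w f x"
  unfolding dunkl_dir_def by (simp add: dir_deriv_add_dir inner_add_right sum.distrib algebra_simps)

lemma dunkl_dir_scaleR_dir:
  "f \<in> poly_fun \<Longrightarrow> dunkl_dir (c *\<^sub>R v) f x = complex_of_real c * dunkl_dir v f x"
  unfolding dunkl_dir_def by (simp add: dir_deriv_scaleR_dir sum_distrib_left algebra_simps)

lemma dunkl_dir_diff_dir: "f \<in> poly_fun \<Longrightarrow> dunkl_dir (v - w) f x = dunkl_dir v f x - dunkl_dir w f x"
  unfolding dunkl_dir_def by (simp add: dir_deriv_diff_dir inner_diff_right sum_subtractf algebra_simps)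

lemma dunkl_dir_sum_dir:
  assumes "g \<in> poly_fun" and "finite I"
  shows "dunkl_dir (\<Sum>i\<in>I. c i *\<^sub>R v i) g x = (\<Sum>i\<in>I. complex_of_real (c i) * dunkl_dir (v i) g x)"
  using assms(2)
proof (induction I rule: finite_induct)
  case empty
  then show ?case using dunkl_dir_scaleR_dir[OF assms(1), of 0 0 x] by simp
qed (simp add: assms(1) dunkl_dir_add_dir dunkl_dir_scaleR_dir)

lemma dunkl_dir_coord_mult:
  assumes f: "f \<in> poly_fun"
  shows "dunkl_dir v (\<lambda>y. complex_of_real (y $ l) * f y) x
       = complex_of_real (x $ l) * dunkl_dir v f x + complex_of_real (v $ l) * f x
         + (\<Sum>b\<in>Rp. \<kappa> b * complex_of_real (b \<bullet> v) * complex_of_real (b $ l) * f (refl b x))"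
proof -
  have "(\<lambda>y. complex_of_real (y $ l) * f y) = (\<lambda>y. f y * complex_of_real (y $ l))"
    by (simp add: mult.commute)
  moreover have "dquot b (\<lambda>y. f y * complex_of_real (y $ l)) x
      = dquot b f x * complex_of_real (x $ l) + f (refl b x) * complex_of_real (b $ l)"
    if "b \<in> Rp" for b
    using inner_positive_self[OF that] f by (simp add: dquot_mult poly_fun_coord dquot_coord)
  moreover have "dir_deriv v (\<lambda>y. f y * complex_of_real (y $ l)) x
      = dir_deriv v f x * complex_of_real (x $ l) + f x * complex_of_real (v $ l)"
    using f by (simp add: dir_deriv_mult poly_fun_coord dir_deriv_coord)
  ultimately show ?thesis
    unfolding dunkl_dir_def
    by (simp add: sum_distrib_left sum.distrib[symmetric] algebra_simps cong: sum.cong)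
qed

lemma dunkl_dir_norm2_mult:
  assumes f: "f \<in> poly_fun"
  shows "dunkl_dir v (\<lambda>y. norm2 y * f y) x = complex_of_real (2 * (v \<bullet> x)) * f x + norm2 x * dunkl_dir v f x"
proof -
  have "dquot b (\<lambda>y. norm2 y * f y) x = norm2 x * dquot b f x" if "b \<in> Rp" for b
    using that positive_subset f inner_root_self_nonzero
    by (auto simp: dquot_mult poly_fun_norm2 dquot_norm2 norm2_refl)
  moreover have "dir_deriv v (\<lambda>y. norm2 y * f y) x
      = complex_of_real (2 * (v \<bullet> x)) * f x + norm2 x * dir_deriv v f x"
    using f by (simp add: dir_deriv_mult poly_fun_norm2 dir_deriv_norm2)
  ultimately show ?thesis
    unfolding dunkl_dir_def by (simp add: sum_distrib_left algebra_simps cong: sum.cong)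
qed

text \<open>The sum over \<open>R\<^sub>+\<close> is doubled to a sum over \<open>R\<close>, which \<open>r\<^sub>a\<close> permutes.\<close>

lemma dunkl_dir_compose_refl:
  assumes a: "a \<in> R" and f: "f \<in> poly_fun"
  shows "dunkl_dir w (\<lambda>y. f (refl a y)) x = dunkl_dir (refl a w) f (refl a x)"
proof -
  let ?h = "\<lambda>b. \<kappa> b * complex_of_real (b \<bullet> w) * dquot (refl a b) f (refl a x)"
  let ?k = "\<lambda>b. \<kappa> b * complex_of_real (b \<bullet> refl a w) * dquot b f (refl a x)"
  have "2 * (\<Sum>b\<in>Rp. \<kappa> b * complex_of_real (b \<bullet> w) * dquot b (\<lambda>y. f (refl a y)) x)
      = 2 * (\<Sum>b\<in>Rp. ?h b)"
    using inner_root_self_nonzero[OF a] by (simp add: dquot_compose_refl)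
  also have "\<dots> = (\<Sum>b\<in>R. ?h b)"
    by (rule sum_roots_even[symmetric])
      (simp add: kappa_uminus refl_uminus dquot_uminus_root f inner_minus_left)
  also have "\<dots> = (\<Sum>b\<in>R. ?h (refl a b))"
    by (rule sum_roots_reindex_refl[OF a, symmetric])
  also have "\<dots> = (\<Sum>b\<in>R. ?k b)"
    by (rule sum.cong)
      (simp_all add: refl_refl[OF inner_root_self_nonzero[OF a]] kappa_refl[OF a] inner_refl_left)
  also have "\<dots> = 2 * (\<Sum>b\<in>Rp. ?k b)"
    by (rule sum_roots_even) (simp add: kappa_uminus dquot_uminus_root f inner_minus_left)
  finally show ?thesis
    unfolding dunkl_dir_def by (simp add: dir_deriv_compose_linear[OF refl_linear])
qed

lemma dunkl_dir_compose_positive_refl: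
  assumes "b \<in> Rp" and f: "f \<in> poly_fun"
  shows "dunkl_dir v (\<lambda>y. f (refl b y)) x
       = dunkl_dir v f (refl b x) - complex_of_real (b \<bullet> v) * dunkl_dir b f (refl b x)"
proof -
  have b: "b \<in> R" using assms(1) positive_subset by blast
  have "dunkl_dir v (\<lambda>y. f (refl b y)) x = dunkl_dir (refl b v) f (refl b x)"
    by (rule dunkl_dir_compose_refl[OF b f])
  also have "refl b v = v - (b \<bullet> v) *\<^sub>R b"
    by (rule refl_root_norm2[OF inner_root_self[OF b]])
  finally show ?thesis by (simp add: dunkl_dir_diff_dir dunkl_dir_scaleR_dir f)
qed

lemma dunkl_dir_dunkl_dir_coord_mult:
  assumes f: "f \<in> poly_fun"
  shows "dunkl_dir v (dunkl_dir w (\<lambda>z. complex_of_real (z $ l) * f z)) x =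
     complex_of_real (x $ l) * dunkl_dir v (dunkl_dir w f) x
     + complex_of_real (v $ l) * dunkl_dir w f x + complex_of_real (w $ l) * dunkl_dir v f x
     + (\<Sum>b\<in>Rp. \<kappa> b * complex_of_real (b $ l) *
          (complex_of_real (b \<bullet> v) * dunkl_dir w f (refl b x)
           + complex_of_real (b \<bullet> w) * dunkl_dir v f (refl b x)
           - complex_of_real (b \<bullet> w) * complex_of_real (b \<bullet> v) * dunkl_dir b f (refl b x)))"
proof -
  let ?A = "\<lambda>y. complex_of_real (y $ l) * dunkl_dir w f y"
  let ?B = "\<lambda>y. complex_of_real (w $ l) * f y"
  let ?c = "\<lambda>b. \<kappa> b * complex_of_real (b \<bullet> w) * complex_of_real (b $ l)"
  let ?C = "\<lambda>y. \<Sum>b\<in>Rp. ?c b * f (refl b y)"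
  have w: "dunkl_dir w f \<in> poly_fun" using poly_fun_dunkl_dir[OF f] by simp
  have A: "?A \<in> poly_fun" by (intro poly_fun_mult poly_fun_coord w)
  have B: "?B \<in> poly_fun" by (intro poly_fun_cmult f)
  have Cb: "(\<lambda>y. ?c b * f (refl b y)) \<in> poly_fun" for b
    by (intro poly_fun_cmult poly_fun_compose_refl f)
  have C: "?C \<in> poly_fun" by (intro poly_fun_sum finite_positive Cb)
  have "dunkl_dir w (\<lambda>z. complex_of_real (z $ l) * f z) = (\<lambda>y. ?A y + ?B y + ?C y)"
    by (rule ext) (simp add: dunkl_dir_coord_mult[OF f] mult.assoc)
  then have "dunkl_dir v (dunkl_dir w (\<lambda>z. complex_of_real (z $ l) * f z)) x
      = dunkl_dir v ?A x + dunkl_dir v ?B x + dunkl_dir v ?C x"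
    using A B C by (simp add: dunkl_dir_add poly_fun_add)
  also have "dunkl_dir v ?A x = complex_of_real (x $ l) * dunkl_dir v (dunkl_dir w f) x
      + complex_of_real (v $ l) * dunkl_dir w f x
      + (\<Sum>b\<in>Rp. \<kappa> b * complex_of_real (b \<bullet> v) * complex_of_real (b $ l) * dunkl_dir w f (refl b x))"
    by (rule dunkl_dir_coord_mult[OF w])
  also have "dunkl_dir v ?B x = complex_of_real (w $ l) * dunkl_dir v f x"
    by (rule dunkl_dir_cmult[OF f])
  also have "dunkl_dir v ?C x = (\<Sum>b\<in>Rp. ?c b * dunkl_dir v (\<lambda>y. f (refl b y)) x)"
    by (simp add: dunkl_dir_sum[OF finite_positive Cb] dunkl_dir_cmult poly_fun_compose_refl f)
  also have "\<dots> = (\<Sum>b\<in>Rp. ?c b * (dunkl_dir v f (refl b x)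
                    - complex_of_real (b \<bullet> v) * dunkl_dir b f (refl b x)))"
    by (rule sum.cong) (simp_all add: dunkl_dir_compose_positive_refl f)
  finally show ?thesis
    by (simp add: sum.distrib[symmetric] algebra_simps cong: sum.cong)
qed

lemma dunkl_dir_commute: "f \<in> poly_fun \<Longrightarrow> dunkl_dir v (dunkl_dir w f) x = dunkl_dir w (dunkl_dir v f) x"
proof (induction f arbitrary: v w x rule: poly_fun_horner_induct)
  case (coord_mult f l)
  then show ?case unfolding dunkl_dir_dunkl_dir_coord_mult[OF coord_mult.hyps] by (simp add: algebra_simps)
next
  case (add f g)
  have "dunkl_dir u (\<lambda>x. f x + g x) = (\<lambda>y. dunkl_dir u f y + dunkl_dir u g y)" for u
    by (rule ext) (simp add: dunkl_dir_add add.hyps)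
  with add show ?case by (simp add: dunkl_dir_add poly_fun_dunkl_dir)
qed simp

lemma dunkl_commute:
  "f \<in> poly_fun \<Longrightarrow> dunkl Rp \<kappa> i (dunkl Rp \<kappa> j f) x = dunkl Rp \<kappa> j (dunkl Rp \<kappa> i f) x"
  by (simp add: dunkl_eq_dunkl_dir dunkl_dir_commute)

end

lemma symdiff1_symdiff1_self [simp]: "symdiff1 (symdiff1 B i) i = B"
  unfolding symdiff1_def by auto

lemma symdiff1_commute: "symdiff1 (symdiff1 B i) j = symdiff1 (symdiff1 B j) i"
  unfolding symdiff1_def by auto

lemma clif_sign_symdiff1_greater:
  assumes "i < j"
  shows "clif_sign i (symdiff1 A j) = clif_sign (i::'n::linorder) A"
proof -
  have "{l \<in> symdiff1 A j. l < i} = {l \<in> A. l < i}" and "(i \<in> symdiff1 A j) = (i \<in> A)"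
    using assms unfolding symdiff1_def by auto
  then show ?thesis unfolding clif_sign_def by simp
qed

lemma clif_sign_symdiff1_less:
  assumes "i < j"
  shows "clif_sign j (symdiff1 A i) = - clif_sign (j::'n::{finite,linorder}) A"
proof -
  have "(-1::complex) ^ card {l \<in> symdiff1 A i. l < j} = - ((-1) ^ card {l \<in> A. l < j})"
  proof (cases "i \<in> A")
    case True
    then have diff: "{l \<in> symdiff1 A i. l < j} = {l \<in> A. l < j} - {i}"
      and "i \<in> {l \<in> A. l < j}"
      using assms unfolding symdiff1_def by auto
    then have "card {l \<in> A. l < j} = Suc (card ({l \<in> A. l < j} - {i}))"
      by (intro card_Suc_Diff1[symmetric]) simp_all
    then show ?thesis by (simp add: diff)
  next
    case False
    then have "{l \<in> symdiff1 A i. l < j} = insert i {l \<in> A. l < j}" "i \<notin> {l \<in> A. l < j}"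
      using assms unfolding symdiff1_def by auto
    then show ?thesis by simp
  qed
  moreover have "(j \<in> symdiff1 A i) = (j \<in> A)"
    using assms unfolding symdiff1_def by auto
  ultimately show ?thesis unfolding clif_sign_def by simp
qed

lemma clif_sign_symdiff1_self: "clif_sign i (symdiff1 A i) * clif_sign i A = -1"
proof -
  have "{l \<in> symdiff1 A i. l < i} = {l \<in> A. l < i}" and "(i \<in> symdiff1 A i) = (i \<notin> A)"
    unfolding symdiff1_def by auto
  then show ?thesis
    unfolding clif_sign_def by (auto simp: power_add[symmetric] mult_2[symmetric] power_mult)
qed

definition e_mult_coeff :: "'n::{finite,linorder} \<Rightarrow> 'n set \<Rightarrow> complex" where
  "e_mult_coeff i A = clif_sign i (symdiff1 A i)"

definition e_mult2_coeff :: "'n::{finite,linorder} \<Rightarrow> 'n \<Rightarrow> 'n set \<Rightarrow> complex" where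
  "e_mult2_coeff j i A = e_mult_coeff j A * e_mult_coeff i (symdiff1 A j)"

lemma e_mult_eq: "e_mult i u A = e_mult_coeff i A * u (symdiff1 A i)"
  unfolding e_mult_def e_mult_coeff_def ..

lemma e_mult2_coeff_anticommute:
  "e_mult2_coeff j i A + e_mult2_coeff i j A = (if i = j then -2 else 0)"
proof -
  have anti: "e_mult2_coeff j i A + e_mult2_coeff i j A = 0" if "i < j" for i j
  proof -
    have "clif_sign i (symdiff1 (symdiff1 A j) i) = clif_sign i (symdiff1 A i)"
      unfolding symdiff1_commute[of A j i] by (rule clif_sign_symdiff1_greater[OF that])
    moreover have "clif_sign j (symdiff1 (symdiff1 A i) j) = - clif_sign j (symdiff1 A j)"
      unfolding symdiff1_commute[of A i j] by (rule clif_sign_symdiff1_less[OF that])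
    ultimately show ?thesis unfolding e_mult2_coeff_def e_mult_coeff_def by simp
  qed
  show ?thesis
  proof (cases i j rule: linorder_cases)
    case equal
    then show ?thesis
      using clif_sign_symdiff1_self[of i A] by (simp add: e_mult2_coeff_def e_mult_coeff_def mult.commute)
  qed (use anti[of i j] anti[of j i] in \<open>simp_all add: add.commute\<close>)
qed

lemma sum_e_mult2_coeff_symmetric:
  fixes K :: "'n::{finite,linorder} \<Rightarrow> 'n \<Rightarrow> complex"
  assumes K: "\<And>i j. K i j = K j i"
  shows "(\<Sum>j\<in>UNIV. \<Sum>i\<in>UNIV. e_mult2_coeff j i A * K j i) = - (\<Sum>i\<in>UNIV. K i i)"
proof -
  let ?S = "\<Sum>j\<in>UNIV. \<Sum>i\<in>UNIV. e_mult2_coeff j i A * K j i"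
  let ?T = "\<Sum>j\<in>UNIV. \<Sum>i\<in>UNIV. e_mult2_coeff i j A * K j i"
  have "?S = (\<Sum>j\<in>UNIV. \<Sum>i\<in>UNIV. e_mult2_coeff i j A * K i j)"
    by (rule sum.swap)
  also have "\<dots> = ?T"
    by (intro sum.cong refl) (simp only: K[of i j for i j])
  finally have "?S + ?S = ?S + ?T" by simp
  also have "\<dots> = (\<Sum>j\<in>UNIV. \<Sum>i\<in>UNIV. (e_mult2_coeff j i A + e_mult2_coeff i j A) * K j i)"
    by (simp only: sum.distrib distrib_right)
  also have "\<dots> = (\<Sum>j\<in>UNIV. \<Sum>i\<in>UNIV. if i = j then -2 * K j j else 0)"
    by (intro sum.cong refl) (simp add: e_mult2_coeff_anticommute)
  also have "\<dots> = (\<Sum>j\<in>UNIV. -2 * K j j)"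
    by (intro sum.cong refl) (simp only: sum.delta finite UNIV_I if_True)
  finally have "?S + ?S = -2 * (\<Sum>j\<in>UNIV. K j j)" by (simp only: sum_distrib_left)
  then show ?thesis by algebra
qed

context dunkl_setting
begin

definition mu :: complex where
  "mu = of_nat CARD('n) + 2 * (\<Sum>b\<in>Rp. \<kappa> b)"

definition euler where
  "euler g x = dir_deriv x g x"

definition dplus_sq where
  "dplus_sq g x = - dunkl_laplacian Rp \<kappa> g x + 4 * euler g x + 2 * mu * g x - 4 * norm2 x * g x"

lemma poly_fun_dunkl: "g \<in> poly_fun \<Longrightarrow> (\<lambda>x. dunkl Rp \<kappa> i g x) \<in> poly_fun"
  by (simp add: dunkl_eq_dunkl_dir poly_fun_dunkl_dir)

lemma dunkl_add:
  "f \<in> poly_fun \<Longrightarrow> g \<in> poly_fun \<Longrightarrow>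
     dunkl Rp \<kappa> j (\<lambda>x. f x + g x) x = dunkl Rp \<kappa> j f x + dunkl Rp \<kappa> j g x"
  by (simp add: dunkl_eq_dunkl_dir dunkl_dir_add)

lemma dunkl_cmult: "f \<in> poly_fun \<Longrightarrow> dunkl Rp \<kappa> j (\<lambda>x. c * f x) x = c * dunkl Rp \<kappa> j f x"
  by (simp add: dunkl_eq_dunkl_dir dunkl_dir_cmult)

lemma dunkl_uminus: "f \<in> poly_fun \<Longrightarrow> dunkl Rp \<kappa> j (\<lambda>x. - f x) x = - dunkl Rp \<kappa> j f x"
  using dunkl_cmult[of f j "-1"] by simp

lemma dunkl_sum:
  "finite I \<Longrightarrow> (\<And>i. i \<in> I \<Longrightarrow> f i \<in> poly_fun) \<Longrightarrow>
     dunkl Rp \<kappa> j (\<lambda>x. \<Sum>i\<in>I. f i x) x = (\<Sum>i\<in>I. dunkl Rp \<kappa> j (f i) x)"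
  by (simp add: dunkl_eq_dunkl_dir dunkl_dir_sum)

lemma dunkl_coord_mult:
  assumes "f \<in> poly_fun"
  shows "dunkl Rp \<kappa> j (\<lambda>y. complex_of_real (y $ i) * f y) x =
       complex_of_real (x $ i) * dunkl Rp \<kappa> j f x + (if i = j then f x else 0)
       + (\<Sum>b\<in>Rp. \<kappa> b * complex_of_real (b $ j) * complex_of_real (b $ i) * f (refl b x))"
proof -
  have "axis j 1 $ i = (if i = j then 1 else (0::real))" by (simp add: axis_def)
  then show ?thesis using assms by (simp add: dunkl_eq_dunkl_dir dunkl_dir_coord_mult inner_axis)
qed

lemma sum_coord_mult_dunkl:
  assumes g: "g \<in> poly_fun"
  shows "(\<Sum>i\<in>UNIV. complex_of_real (x $ i) * dunkl Rp \<kappa> i g x)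
       = euler g x + (\<Sum>b\<in>Rp. \<kappa> b * (g x - g (refl b x)))"
proof -
  have "(\<Sum>i\<in>UNIV. complex_of_real (x $ i) * dunkl Rp \<kappa> i g x) = dunkl_dir (\<Sum>i\<in>UNIV. (x $ i) *\<^sub>R axis i 1) g x"
    by (simp add: dunkl_dir_sum_dir[OF g] dunkl_eq_dunkl_dir)
  also have "(\<Sum>i\<in>UNIV. (x $ i) *\<^sub>R axis i 1) = x"
    using basis_expansion[of x] by (simp add: scalar_mult_eq_scaleR)
  also have "dunkl_dir x g x = euler g x + (\<Sum>b\<in>Rp. \<kappa> b * (g x - g (refl b x)))"
    unfolding dunkl_dir_def euler_def
    by (intro arg_cong2[where f="(+)"] refl sum.cong)
      (simp add: mult.assoc inner_mult_dquot[OF inner_positive_self])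
  finally show ?thesis .
qed

lemma sum_positive_coord_sq:
  "(\<Sum>i\<in>UNIV. \<Sum>b\<in>Rp. \<kappa> b * (complex_of_real (b $ i) * complex_of_real (b $ i)) * g (refl b x))
     = (\<Sum>b\<in>Rp. \<kappa> b * 2 * g (refl b x))"
proof -
  have "(\<Sum>i\<in>UNIV. complex_of_real (b $ i) * complex_of_real (b $ i)) = 2" if "b \<in> Rp" for b
    using inner_positive_self[OF that] by (simp add: inner_vec_def flip: of_real_mult of_real_sum)
  moreover have "(\<Sum>i\<in>UNIV. \<Sum>b\<in>Rp. \<kappa> b * (complex_of_real (b $ i) * complex_of_real (b $ i)) * g (refl b x))
      = (\<Sum>b\<in>Rp. \<kappa> b * (\<Sum>i\<in>UNIV. complex_of_real (b $ i) * complex_of_real (b $ i)) * g (refl b x))"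
    by (subst sum.swap) (simp add: sum_distrib_left sum_distrib_right)
  ultimately show ?thesis by simp
qed

lemma D_plus_component:
  "D_plus Rp \<kappa> G x A =
     (\<Sum>i\<in>UNIV. e_mult_coeff i A * (- dunkl Rp \<kappa> i (\<lambda>y. G y (symdiff1 A i)) x
                                       + 2 * complex_of_real (x $ i) * G x (symdiff1 A i)))"
  unfolding D_plus_def dirac_def e_mult_eq dunkl_clif_def
  by (simp add: sum_distrib_left sum_negf[symmetric] sum.distrib[symmetric] algebra_simps)

lemma dunkl_D_plus_component:
  assumes F: "\<And>B. (\<lambda>y. F y B) \<in> poly_fun"
  shows "dunkl Rp \<kappa> j (\<lambda>y. D_plus Rp \<kappa> F y B) x =
    (\<Sum>i\<in>UNIV. e_mult_coeff i B * (- dunkl Rp \<kappa> j (dunkl Rp \<kappa> i (\<lambda>y. F y (symdiff1 B i))) x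
        + 2 * dunkl Rp \<kappa> j (\<lambda>y. complex_of_real (y $ i) * F y (symdiff1 B i)) x))"
proof -
  define G where "G i y = - dunkl Rp \<kappa> i (\<lambda>y. F y (symdiff1 B i)) y
                          + 2 * (complex_of_real (y $ i) * F y (symdiff1 B i))" for i y
  have D: "(\<lambda>y. - dunkl Rp \<kappa> i (\<lambda>y. F y (symdiff1 B i)) y) \<in> poly_fun"
    and X: "(\<lambda>y. complex_of_real (y $ i) * F y (symdiff1 B i)) \<in> poly_fun" for i
    by (intro poly_fun_uminus poly_fun_dunkl poly_fun_mult poly_fun_coord F)+
  have G: "G i \<in> poly_fun" for i
    unfolding G_def[abs_def] by (intro poly_fun_add D poly_fun_cmult X)
  have "(\<lambda>y. D_plus Rp \<kappa> F y B) = (\<lambda>y. \<Sum>i\<in>UNIV. e_mult_coeff i B * G i y)"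
    by (rule ext) (simp add: D_plus_component G_def mult.assoc)
  then have "dunkl Rp \<kappa> j (\<lambda>y. D_plus Rp \<kappa> F y B) x = (\<Sum>i\<in>UNIV. e_mult_coeff i B * dunkl Rp \<kappa> j (G i) x)"
    by (simp add: dunkl_sum poly_fun_cmult G dunkl_cmult)
  moreover have "dunkl Rp \<kappa> j (G i) x = - dunkl Rp \<kappa> j (dunkl Rp \<kappa> i (\<lambda>y. F y (symdiff1 B i))) x
        + 2 * dunkl Rp \<kappa> j (\<lambda>y. complex_of_real (y $ i) * F y (symdiff1 B i)) x" for i
    unfolding G_def
    by (simp only: dunkl_add[OF D poly_fun_cmult[OF X]] dunkl_uminus[OF poly_fun_dunkl[OF F]]
        dunkl_cmult[OF X])
  ultimately show ?thesis by (simp only:)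
qed

lemma D_plus_D_plus_expand:
  assumes F: "\<And>B. (\<lambda>y. F y B) \<in> poly_fun"
  shows "D_plus Rp \<kappa> (D_plus Rp \<kappa> F) x A =
    (\<Sum>j\<in>UNIV. \<Sum>i\<in>UNIV. e_mult2_coeff j i A *
      (dunkl Rp \<kappa> j (dunkl Rp \<kappa> i (\<lambda>y. F y (symdiff1 (symdiff1 A j) i))) x
       - 2 * dunkl Rp \<kappa> j (\<lambda>y. complex_of_real (y $ i) * F y (symdiff1 (symdiff1 A j) i)) x
       - 2 * complex_of_real (x $ j) * dunkl Rp \<kappa> i (\<lambda>y. F y (symdiff1 (symdiff1 A j) i)) x
       + 4 * complex_of_real (x $ j) * complex_of_real (x $ i) * F x (symdiff1 (symdiff1 A j) i)))"
  unfolding D_plus_component[of "D_plus Rp \<kappa> F"] dunkl_D_plus_component[OF F]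
    D_plus_component[of F x "symdiff1 A _"] e_mult2_coeff_def
  by (simp add: sum_distrib_left sum_negf[symmetric] sum.distrib[symmetric] algebra_simps)

text \<open>The square of \<open>D\<^sub>+\<close> is scalar: by the Clifford relations only the symmetric part in \<open>(i, j)\<close>
  of the double sum survives, and the Dunkl operators commute.\<close>

lemma D_plus_D_plus:
  assumes F: "\<And>B. (\<lambda>y. F y B) \<in> poly_fun"
  shows "D_plus Rp \<kappa> (D_plus Rp \<kappa> F) x A = dplus_sq (\<lambda>y. F y A) x"
proof -
  define C where "C j i = symdiff1 (symdiff1 A j) i" for j i
  define K where "K j i = dunkl Rp \<kappa> j (dunkl Rp \<kappa> i (\<lambda>y. F y (C j i))) x
       - 2 * (complex_of_real (x $ i) * dunkl Rp \<kappa> j (\<lambda>y. F y (C j i)) x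
              + (if i = j then F x (C j i) else 0)
              + (\<Sum>b\<in>Rp. \<kappa> b * complex_of_real (b $ j) * complex_of_real (b $ i) * F (refl b x) (C j i)))
       - 2 * complex_of_real (x $ j) * dunkl Rp \<kappa> i (\<lambda>y. F y (C j i)) x
       + 4 * complex_of_real (x $ j) * complex_of_real (x $ i) * F x (C j i)" for j i
  have "D_plus Rp \<kappa> (D_plus Rp \<kappa> F) x A = (\<Sum>j\<in>UNIV. \<Sum>i\<in>UNIV. e_mult2_coeff j i A * K j i)"
    unfolding D_plus_D_plus_expand[OF F] K_def C_def dunkl_coord_mult[OF F] ..
  also have "\<dots> = - (\<Sum>i\<in>UNIV. K i i)"
  proof (rule sum_e_mult2_coeff_symmetric)
    fix i j
    show "K i j = K j i"
      unfolding K_def C_def symdiff1_commute[of A i j] dunkl_commute[OF F, of i j]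
      by (simp add: algebra_simps)
  qed
  also have "(\<Sum>i\<in>UNIV. K i i) = (\<Sum>i\<in>UNIV. dunkl Rp \<kappa> i (dunkl Rp \<kappa> i (\<lambda>y. F y A)) x)
        - 4 * (\<Sum>i\<in>UNIV. complex_of_real (x $ i) * dunkl Rp \<kappa> i (\<lambda>y. F y A) x)
        - 2 * (\<Sum>i\<in>(UNIV::'n set). F x A)
        - 2 * (\<Sum>i\<in>UNIV. \<Sum>b\<in>Rp. \<kappa> b * (complex_of_real (b $ i) * complex_of_real (b $ i)) * F (refl b x) A)
        + 4 * (\<Sum>i\<in>UNIV. complex_of_real (x $ i) * complex_of_real (x $ i)) * F x A"
    unfolding K_def C_def
    by (simp add: sum.distrib sum_subtractf sum_distrib_left sum_distrib_right algebra_simps)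
  also note sum_positive_coord_sq
  also note sum_coord_mult_dunkl[OF F]
  also have "(\<Sum>i\<in>UNIV. complex_of_real (x $ i) * complex_of_real (x $ i)) = norm2 x"
    by (simp add: norm2_def power2_norm_eq_inner inner_vec_def)
  finally show ?thesis
    unfolding dplus_sq_def mu_def dunkl_laplacian_def
    by (simp add: sum_subtractf sum_distrib_left sum_distrib_right algebra_simps)
qed

end

lemma of_nat_Suc_times_binomial:
  "of_nat (Suc k) * (of_nat (n choose Suc k) :: 'a::comm_semiring_1) = of_nat (n - k) * of_nat (n choose k)"
  by (simp only: of_nat_mult[symmetric] binomial_absorption binomial_absorb_comp)

text \<open>The coefficient of \<open>z\<^sup>n\<^sup>+\<^sup>1\<close> in the identity \<open>laguerre_step_laguerre_poly\<close> below, divided by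
  \<open>-4\<^sup>t\<^sup>+\<^sup>1 (-1)\<^sup>n\<close>.\<close>

lemma laguerre_coeff_recurrence:
  fixes a :: complex and t n :: nat
  shows "of_nat (n+2) * (of_nat n + a + 2) * (of_nat (t choose (n+2)) * pochhammer (of_nat (n+2) + a + 1) (t - (n+2)))
   + (2 * of_nat n + a + 3) * (of_nat (t choose (n+1)) * pochhammer (of_nat (n+1) + a + 1) (t - (n+1)))
   + of_nat (t choose n) * pochhammer (of_nat n + a + 1) (t - n)
   = of_nat (Suc t choose (n+1)) * pochhammer (of_nat (n+1) + a + 1) (Suc t - (n+1))"
proof (cases "t \<le> n")
  case True
  then show ?thesis by (cases "t = n") (simp_all add: binomial_eq_0)
next
  case False
  then obtain m where t: "t = n + 1 + m"
    using le_Suc_ex[of "n + 1" t] by auto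
  define C0 where "C0 = (of_nat (t choose n) :: complex)"
  define C1 where "C1 = (of_nat (t choose (n+1)) :: complex)"
  define C2 where "C2 = (of_nat (t choose (n+2)) :: complex)"
  define P where "P = pochhammer (of_nat n + a + 2) m"
  have C1_C0: "of_nat (n+1) * C1 = of_nat (m+1) * C0"
    using of_nat_Suc_times_binomial[of n t] t unfolding C0_def C1_def by simp
  have "Suc (n+1) = n+2" and "t - (n+1) = m" using t by simp_all
  then have C2_C1: "of_nat (n+2) * C2 = of_nat m * C1"
    using of_nat_Suc_times_binomial[of "n+1" t] unfolding C1_def C2_def by (simp only:)
  have P2: "(of_nat n + a + 2) * (C2 * pochhammer (of_nat (n+2) + a + 1) (t - (n+2))) = C2 * P"
  proof (cases m)
    case 0
    then have "C2 = 0" unfolding C2_def t by (simp add: binomial_eq_0)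
    then show ?thesis by simp
  next
    case (Suc m')
    then show ?thesis
      using pochhammer_rec[of "of_nat n + a + 2" m'] unfolding P_def t by (simp add: add_ac)
  qed
  have P1: "pochhammer (of_nat (n+1) + a + 1) (t - (n+1)) = P"
    unfolding P_def t by (simp add: add_ac)
  have P0: "pochhammer (of_nat n + a + 1) (t - n) = (of_nat n + a + 1) * P"
    using pochhammer_rec[of "of_nat n + a + 1" m] unfolding P_def t by (simp add: add_ac)
  have P_Suc: "pochhammer (of_nat (n+1) + a + 1) (Suc t - (n+1)) = P * (of_nat n + a + 2 + of_nat m)"
    using pochhammer_Suc[of "of_nat n + a + 2" m] unfolding P_def t by (simp add: add_ac)
  have C_Suc: "of_nat (Suc t choose (n+1)) = C0 + C1"
    unfolding C0_def C1_def by simp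
  have "of_nat (n+2) * (of_nat n + a + 2) * (C2 * pochhammer (of_nat (n+2) + a + 1) (t - (n+2)))
      = of_nat m * C1 * P"
    by (simp only: mult.assoc P2) (simp only: mult.assoc[symmetric] C2_C1)
  moreover have "of_nat m * C1 * P + (2 * of_nat n + a + 3) * (C1 * P) + C0 * ((of_nat n + a + 1) * P)
      = (C0 + C1) * (P * (of_nat n + a + 2 + of_nat m)) + P * (of_nat (n+1) * C1 - of_nat (m+1) * C0)"
    unfolding of_nat_add of_nat_1 by algebra
  ultimately show ?thesis
    using C1_C0 unfolding C0_def[symmetric] C1_def[symmetric] C2_def[symmetric] P1 P0 P_Suc C_Suc
    by simp
qed

lemma laguerre_coeff_recurrence_0:
  fixes a :: complex
  shows "(a + 1) * (of_nat (t choose 1) * pochhammer (1 + a + 1) (t - 1)) + (a + 1) * pochhammer (0 + a + 1) t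
     = pochhammer (0 + a + 1) (Suc t)"
proof (cases t)
  case (Suc m)
  have "(a + 1) * pochhammer (a + 2) m = pochhammer (a + 1) (Suc m)"
    using pochhammer_rec[of "a + 1" m] by (simp add: add_ac)
  then show ?thesis
    unfolding Suc using pochhammer_Suc[of "a + 1" "Suc m"]
    by (simp add: add_ac distrib_left distrib_right mult.commute mult.left_commute)
qed simp

definition laguerre_coeff :: "complex \<Rightarrow> nat \<Rightarrow> nat \<Rightarrow> complex" where
  "laguerre_coeff a t j = 4 ^ t * (-1) ^ j * of_nat (t choose j) * pochhammer (of_nat j + a + 1) (t - j)"

definition laguerre_poly :: "complex \<Rightarrow> nat \<Rightarrow> complex poly" where
  "laguerre_poly a t = (\<Sum>j\<le>t. monom (laguerre_coeff a t j) j)"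

definition laguerre_step :: "complex \<Rightarrow> complex poly \<Rightarrow> complex poly" where
  "laguerre_step a p = smult (-4) (pCons 0 (pderiv (pderiv p))) + smult (-4 * (a + 1)) (pderiv p)
     + smult 8 (pCons 0 (pderiv p)) + smult (4 * (a + 1)) p + smult (-4) (pCons 0 p)"

lemma coeff_laguerre_poly: "coeff (laguerre_poly a t) j = laguerre_coeff a t j"
proof -
  have "coeff (laguerre_poly a t) j = (if j \<le> t then laguerre_coeff a t j else 0)"
    unfolding laguerre_poly_def by (simp add: coeff_sum coeff_monom)
  then show ?thesis by (simp add: laguerre_coeff_def binomial_eq_0)
qed

lemma laguerre_poly_0: "laguerre_poly a 0 = 1"
  unfolding laguerre_poly_def laguerre_coeff_def by (simp add: monom_0 one_pCons)

lemma coeff_laguerre_step_0: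
  "coeff (laguerre_step a p) 0 = -4 * (a + 1) * coeff p 1 + 4 * (a + 1) * coeff p 0"
  unfolding laguerre_step_def by (simp add: coeff_pderiv)

lemma coeff_laguerre_step_Suc:
  "coeff (laguerre_step a p) (Suc n) =
     -4 * (of_nat (Suc n) * of_nat (Suc (Suc n))) * coeff p (Suc (Suc n))
     - 4 * (a + 1) * of_nat (Suc (Suc n)) * coeff p (Suc (Suc n))
     + 8 * of_nat (Suc n) * coeff p (Suc n) + 4 * (a + 1) * coeff p (Suc n) - 4 * coeff p n"
  unfolding laguerre_step_def by (simp add: coeff_pderiv algebra_simps)

lemma laguerre_step_laguerre_poly: "laguerre_step a (laguerre_poly a t) = laguerre_poly a (Suc t)"
proof (rule poly_eqI)
  fix j
  show "coeff (laguerre_step a (laguerre_poly a t)) j = coeff (laguerre_poly a (Suc t)) j"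
  proof (cases j)
    case 0
    have "coeff (laguerre_step a (laguerre_poly a t)) 0 = 4 ^ Suc t *
        ((a + 1) * (of_nat (t choose 1) * pochhammer (1 + a + 1) (t - 1)) + (a + 1) * pochhammer (0 + a + 1) t)"
      unfolding coeff_laguerre_step_0 coeff_laguerre_poly laguerre_coeff_def by (simp add: algebra_simps)
    then show ?thesis
      unfolding 0 laguerre_coeff_recurrence_0 coeff_laguerre_poly laguerre_coeff_def by simp
  next
    case (Suc n)
    have "coeff (laguerre_step a (laguerre_poly a t)) (Suc n) = - (4 ^ Suc t * (-1) ^ n) *
      (of_nat (n+2) * (of_nat n + a + 2) * (of_nat (t choose (n+2)) * pochhammer (of_nat (n+2) + a + 1) (t - (n+2)))
       + (2 * of_nat n + a + 3) * (of_nat (t choose (n+1)) * pochhammer (of_nat (n+1) + a + 1) (t - (n+1)))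
       + of_nat (t choose n) * pochhammer (of_nat n + a + 1) (t - n))"
      unfolding coeff_laguerre_step_Suc coeff_laguerre_poly laguerre_coeff_def
      by (simp add: algebra_simps numeral_eq_Suc)
    then show ?thesis
      unfolding Suc laguerre_coeff_recurrence coeff_laguerre_poly laguerre_coeff_def
      by (simp add: algebra_simps)
  qed
qed

lemma laguerre_step_power: "(laguerre_step a ^^ t) 1 = laguerre_poly a t"
  by (induction t) (simp_all add: laguerre_poly_0 laguerre_step_laguerre_poly)

lemma poly_laguerre_poly: "poly (laguerre_poly a t) z = 2 ^ (2 * t) * fact t * laguerre t a z"
proof -
  have "laguerre_coeff a t j * z ^ j
      = 2 ^ (2 * t) * fact t * (pochhammer (of_nat j + a + 1) (t - j) / (fact j * fact (t - j)) * (- z) ^ j)"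
    if "j \<le> t" for j
  proof -
    have "(of_nat (t choose j) :: complex) = fact t / (fact j * fact (t - j))"
      by (rule binomial_fact[OF that])
    moreover have "(4::complex) ^ t = 2 ^ (2 * t)" by (simp add: power_mult)
    ultimately show ?thesis
      unfolding laguerre_coeff_def by (simp add: power_minus' field_simps)
  qed
  then show ?thesis
    unfolding laguerre_poly_def laguerre_def
    by (simp add: poly_sum poly_monom sum_distrib_left)
qed

lemma hom_poly_scaleR:
  assumes "hom_poly k H"
  shows "H (c *\<^sub>R x) = c ^ k * H x"
proof -
  obtain cf where H: "H = (\<lambda>x. \<Sum>a\<in>{a. sum a UNIV = k}. cf a * (\<Prod>i\<in>UNIV. (x $ i) ^ a i))"
    using assms unfolding hom_poly_def by blast
  have "(\<Prod>i\<in>UNIV. ((c *\<^sub>R x) $ i) ^ a i) = c ^ k * (\<Prod>i\<in>UNIV. (x $ i) ^ a i)"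
    if "sum a UNIV = k" for a
    using that by (simp add: power_mult_distrib prod.distrib power_sum[symmetric])
  then show ?thesis unfolding H by (simp add: sum_distrib_left algebra_simps)
qed

lemma poly_fun_hom_poly:
  assumes "hom_poly k H"
  shows "(\<lambda>x. complex_of_real (H x)) \<in> poly_fun"
proof -
  obtain cf where H: "H = (\<lambda>x. \<Sum>a\<in>{a. sum a UNIV = k}. cf a * (\<Prod>i\<in>UNIV. (x $ i) ^ a i))"
    using assms unfolding hom_poly_def by blast
  show ?thesis
  proof (cases "finite {a :: 'a \<Rightarrow> nat. sum a UNIV = k}")
    case True
    have "(\<lambda>x. \<Sum>a\<in>{a. sum a UNIV = k}. complex_of_real (cf a) * (\<Prod>i\<in>UNIV. complex_of_real (x $ i) ^ a i))
        \<in> poly_fun"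
      by (intro poly_fun_sum True poly_fun_cmult poly_fun_prod poly_fun_power poly_fun_coord) auto
    then show ?thesis unfolding H by simp
  next
    case False
    then show ?thesis unfolding H using poly_fun_const[of 0] by simp
  qed
qed

lemma hom_poly_euler:
  assumes "hom_poly k H"
  shows "dir_deriv x (\<lambda>y. complex_of_real (H y)) x = of_nat k * complex_of_real (H x)"
proof (rule dir_deriv_eqI)
  have "((\<lambda>s::real. (1 + s) ^ k) has_real_derivative real k) (at 0)"
    using DERIV_pow[of k 1] DERIV_shift[of "\<lambda>s. s ^ k" "real k" 0 1] by (simp add: add.commute)
  then have "((\<lambda>s. complex_of_real ((1 + s) ^ k) * complex_of_real (H x))
      has_vector_derivative complex_of_real (real k) * complex_of_real (H x)) (at 0)"
    by (intro has_vector_derivative_mult_left has_vector_derivative_of_real)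
  moreover have "H (x + s *\<^sub>R x) = (1 + s) ^ k * H x" for s
    using hom_poly_scaleR[OF assms, of "1 + s" x] by (simp add: algebra_simps)
  ultimately show "((\<lambda>s. complex_of_real (H (x + s *\<^sub>R x)))
      has_vector_derivative of_nat k * complex_of_real (H x)) (at 0)"
    by simp
qed

definition radial :: "complex poly \<Rightarrow> real^'n \<Rightarrow> complex" where
  "radial p y = poly p (norm2 y)"

lemma radial_pCons: "radial (pCons a p) = (\<lambda>y. a + norm2 y * radial p y)"
  unfolding radial_def by (simp add: fun_eq_iff)

lemma poly_fun_radial: "radial p \<in> poly_fun"
proof (induction p)
  case 0
  then show ?case unfolding radial_def using poly_fun_const[of 0] by simp
next
  case (pCons a p)
  then show ?case unfolding radial_pCons by (intro poly_fun_add poly_fun_const poly_fun_mult poly_fun_norm2)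
qed

context dunkl_setting
begin

lemma euler_mult:
  "f \<in> poly_fun \<Longrightarrow> g \<in> poly_fun \<Longrightarrow> euler (\<lambda>x. f x * g x) x = euler f x * g x + f x * euler g x"
  unfolding euler_def by (rule dir_deriv_mult)

lemma euler_norm2: "euler norm2 x = 2 * norm2 x"
  unfolding euler_def dir_deriv_norm2 norm2_def by (simp add: power2_norm_eq_inner)

lemma euler_radial: "euler (radial p) x = 2 * norm2 x * poly (pderiv p) (norm2 x)"
proof (induction p)
  case 0
  then show ?case unfolding radial_def euler_def by simp
next
  case (pCons a p)
  have "euler (radial (pCons a p)) x = euler (\<lambda>y. norm2 y * radial p y) x"
    unfolding radial_pCons euler_def
    by (simp add: dir_deriv_add poly_fun_const poly_fun_mult poly_fun_norm2 poly_fun_radial)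
  also have "\<dots> = 2 * norm2 x * radial p x + norm2 x * euler (radial p) x"
    by (simp add: euler_mult poly_fun_norm2 poly_fun_radial euler_norm2)
  finally show ?case using pCons.IH unfolding radial_def by (simp add: pderiv_pCons algebra_simps)
qed

lemma dunkl_laplacian_add:
  assumes f: "f \<in> poly_fun" and g: "g \<in> poly_fun"
  shows "dunkl_laplacian Rp \<kappa> (\<lambda>x. f x + g x) x = dunkl_laplacian Rp \<kappa> f x + dunkl_laplacian Rp \<kappa> g x"
proof -
  have "dunkl Rp \<kappa> i (\<lambda>x. f x + g x) = (\<lambda>x. dunkl Rp \<kappa> i f x + dunkl Rp \<kappa> i g x)" for i
    by (rule ext) (rule dunkl_add[OF f g])
  then show ?thesis
    unfolding dunkl_laplacian_def by (simp add: dunkl_add poly_fun_dunkl f g sum.distrib)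
qed

lemma dunkl_laplacian_cmult:
  assumes f: "f \<in> poly_fun"
  shows "dunkl_laplacian Rp \<kappa> (\<lambda>x. c * f x) x = c * dunkl_laplacian Rp \<kappa> f x"
proof -
  have "dunkl Rp \<kappa> i (\<lambda>x. c * f x) = (\<lambda>x. c * dunkl Rp \<kappa> i f x)" for i
    by (rule ext) (rule dunkl_cmult[OF f])
  then show ?thesis
    unfolding dunkl_laplacian_def by (simp add: dunkl_cmult poly_fun_dunkl f sum_distrib_left)
qed

lemma dunkl_laplacian_norm2_mult:
  assumes g: "g \<in> poly_fun"
  shows "dunkl_laplacian Rp \<kappa> (\<lambda>y. norm2 y * g y) x
       = norm2 x * dunkl_laplacian Rp \<kappa> g x + 4 * euler g x + 2 * mu * g x"
proof -
  have dunkl_norm2_mult: "dunkl Rp \<kappa> i (\<lambda>y. norm2 y * f y)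
      = (\<lambda>y. 2 * (complex_of_real (y $ i) * f y) + norm2 y * dunkl Rp \<kappa> i f y)"
    if "f \<in> poly_fun" for i f
    by (rule ext) (simp add: dunkl_eq_dunkl_dir dunkl_dir_norm2_mult[OF that] inner_axis' mult.assoc)
  have X: "(\<lambda>y. complex_of_real (y $ i) * g y) \<in> poly_fun" for i
    by (intro poly_fun_mult poly_fun_coord g)
  have "dunkl Rp \<kappa> i (dunkl Rp \<kappa> i (\<lambda>y. norm2 y * g y)) x =
     2 * (complex_of_real (x $ i) * dunkl Rp \<kappa> i g x + g x
          + (\<Sum>b\<in>Rp. \<kappa> b * complex_of_real (b $ i) * complex_of_real (b $ i) * g (refl b x)))
     + (2 * complex_of_real (x $ i) * dunkl Rp \<kappa> i g x + norm2 x * dunkl Rp \<kappa> i (dunkl Rp \<kappa> i g) x)" for i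
    by (simp add: dunkl_norm2_mult g poly_fun_dunkl dunkl_add poly_fun_cmult X poly_fun_mult
        poly_fun_norm2 dunkl_cmult dunkl_coord_mult)
  then have "dunkl_laplacian Rp \<kappa> (\<lambda>y. norm2 y * g y) x =
     4 * (\<Sum>i\<in>UNIV. complex_of_real (x $ i) * dunkl Rp \<kappa> i g x) + 2 * (\<Sum>i\<in>(UNIV::'n set). g x)
     + 2 * (\<Sum>i\<in>UNIV. \<Sum>b\<in>Rp. \<kappa> b * (complex_of_real (b $ i) * complex_of_real (b $ i)) * g (refl b x))
     + norm2 x * dunkl_laplacian Rp \<kappa> g x"
    unfolding dunkl_laplacian_def by (simp add: sum.distrib sum_distrib_left algebra_simps)
  also note sum_positive_coord_sq
  also note sum_coord_mult_dunkl[OF g]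
  finally show ?thesis
    unfolding mu_def by (simp add: sum_subtractf sum_distrib_left sum_distrib_right algebra_simps)
qed

context
  fixes k :: nat and H :: "real^('n::{finite,linorder}) \<Rightarrow> real"
  assumes hom: "hom_poly k H"
    and harmonic: "\<And>x. dunkl_laplacian Rp \<kappa> (\<lambda>y. complex_of_real (H y)) x = 0"
begin

abbreviation "h \<equiv> \<lambda>y. complex_of_real (H y)"

lemma poly_fun_radial_mult: "(\<lambda>y. radial p y * h y) \<in> poly_fun"
  by (intro poly_fun_mult poly_fun_radial poly_fun_hom_poly[OF hom])

lemma euler_radial_mult:
  "euler (\<lambda>y. radial p y * h y) x = (2 * norm2 x * poly (pderiv p) (norm2 x) + of_nat k * poly p (norm2 x)) * h x"
proof -
  have "euler (\<lambda>y. radial p y * h y) x = euler (radial p) x * h x + radial p x * euler h x"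
    by (rule euler_mult[OF poly_fun_radial poly_fun_hom_poly[OF hom]])
  moreover have "euler h x = of_nat k * h x"
    unfolding euler_def by (rule hom_poly_euler[OF hom])
  ultimately show ?thesis by (simp add: euler_radial radial_def algebra_simps)
qed

lemma dunkl_laplacian_radial_mult:
  "dunkl_laplacian Rp \<kappa> (\<lambda>y. radial p y * h y) x =
     (4 * norm2 x * poly (pderiv (pderiv p)) (norm2 x)
      + (2 * mu + 4 * of_nat k) * poly (pderiv p) (norm2 x)) * h x"
proof (induction p arbitrary: x)
  case 0
  then show ?case
    unfolding radial_def using harmonic dunkl_laplacian_cmult[OF poly_fun_hom_poly[OF hom], of 0] by simp
next
  case (pCons a q)
  have "(\<lambda>y. radial (pCons a q) y * h y) = (\<lambda>y. a * h y + norm2 y * (radial q y * h y))"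
    unfolding radial_pCons by (simp add: fun_eq_iff algebra_simps)
  then have "dunkl_laplacian Rp \<kappa> (\<lambda>y. radial (pCons a q) y * h y) x
     = a * dunkl_laplacian Rp \<kappa> h x + (norm2 x * dunkl_laplacian Rp \<kappa> (\<lambda>y. radial q y * h y) x
       + 4 * euler (\<lambda>y. radial q y * h y) x + 2 * mu * (radial q x * h x))"
    by (simp add: dunkl_laplacian_add dunkl_laplacian_cmult dunkl_laplacian_norm2_mult poly_fun_cmult
        poly_fun_mult poly_fun_norm2 poly_fun_radial_mult poly_fun_hom_poly[OF hom])
  then show ?case
    unfolding pCons.IH euler_radial_mult harmonic
    by (simp add: radial_def pderiv_pCons pderiv_add algebra_simps)
qed

lemma dplus_sq_radial_mult:
  "dplus_sq (\<lambda>y. radial p y * h y) x = poly (laguerre_step (mu / 2 + of_nat k - 1) p) (norm2 x) * h x"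
proof -
  have "4 * (mu / 2 + of_nat k - 1 + 1) = 2 * mu + 4 * of_nat k" by simp
  then show ?thesis
    unfolding dplus_sq_def dunkl_laplacian_radial_mult euler_radial_mult laguerre_step_def
    by (simp add: radial_def pderiv_pCons algebra_simps)
qed

lemma D_plus_D_plus_radial_mult:
  "D_plus Rp \<kappa> (D_plus Rp \<kappa> (\<lambda>y. scal (radial p y * h y)))
     = (\<lambda>y. scal (radial (laguerre_step (mu / 2 + of_nat k - 1) p) y * h y))"
proof (intro ext)
  fix x A
  have F: "(\<lambda>y. scal (radial p y * h y) B) \<in> poly_fun" for B
    by (cases "B = {}") (simp_all add: scal_def poly_fun_radial_mult poly_fun_const)
  have "dplus_sq (\<lambda>x. 0) x = 0"
    unfolding dplus_sq_def dunkl_laplacian_def euler_def by (simp add: dunkl_eq_dunkl_dir)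
  then show "D_plus Rp \<kappa> (D_plus Rp \<kappa> (\<lambda>y. scal (radial p y * h y))) x A
      = scal (radial (laguerre_step (mu / 2 + of_nat k - 1) p) x * h x) A"
    unfolding D_plus_D_plus[OF F]
    by (cases "A = {}") (simp_all add: scal_def dplus_sq_radial_mult radial_def[of "laguerre_step _ p"])
qed

lemma D_plus_power_radial:
  "(D_plus Rp \<kappa> ^^ (2 * t)) (\<lambda>y. scal (h y))
     = (\<lambda>y. scal (radial ((laguerre_step (mu / 2 + of_nat k - 1) ^^ t) 1) y * h y))"
proof (induction t)
  case 0
  then show ?case by (simp add: radial_def)
next
  case (Suc t)
  then show ?case by (simp add: D_plus_D_plus_radial_mult)
qed

end

end

theorem theorem3p4:
  fixes R Rp :: "(real^('n::{finite,linorder})) set"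
    and \<kappa> :: "real^('n::{finite,linorder}) \<Rightarrow> complex"
    and k t :: nat
    and H :: "real^('n::{finite,linorder}) \<Rightarrow> real"
  assumes "normalized_root_system R"
    and "positive_subsystem R Rp"
    and "G_invariant R \<kappa>"
    and "t > 0"
    and "dunkl_harmonic Rp \<kappa> k H"
  shows "let \<gamma> = (\<Sum>\<alpha>\<in>Rp. \<kappa> \<alpha>);
             \<mu> = of_nat CARD('n) + 2 * \<gamma>
         in \<forall>x. (D_plus Rp \<kappa> ^^ (2 * t)) (\<lambda>y. scal (complex_of_real (H y))) x
               = scal (2 ^ (2 * t) * fact t
                       * laguerre t (\<mu> / 2 + of_nat k - 1) (complex_of_real ((norm x)\<^sup>2))
                       * complex_of_real (H x))"
proof -
  interpret dunkl_setting R Rp \<kappa>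
    using assms(1-3) by unfold_locales
  have "hom_poly k H" and "\<And>x. dunkl_laplacian Rp \<kappa> (\<lambda>y. complex_of_real (H y)) x = 0"
    using assms(5) unfolding dunkl_harmonic_def by blast+
  from D_plus_power_radial[OF this] show ?thesis
    by (simp add: laguerre_step_power radial_def poly_laguerre_poly norm2_def mu_def)
qed

end
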